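(* Let $k\ge 1$, $V>0$, and $0\le A\le \frac{2V}{3k}$. Let $y_1,\dots,y_k$ be independent with $y_i\sim N(\mu_i,V+A)$ for known $\mu_i$, let $S_+=\sum_{i=1}^k(y_i-\mu_i)^2$ and $\hat A_{\mathrm{unb}}=S_+/k-V$. Then $P(\hat A_{\mathrm{unb}}<0)=P(\chi^2_k\le kB)>1/2$, where $B=V/(V+A)$. *)

theory Defs
  imports "HOL-Probability.Probability"
begin

definition chi_squared_density :: "nat \<Rightarrow> real \<Rightarrow> real" where
  "chi_squared_density k x =
     (if x > 0 then x powr (real k / 2 - 1) * exp (- x / 2) / (2 powr (real k / 2) * Gamma (real k / 2))
      else 0)"

definition chi_squared :: "nat \<Rightarrow> real measure" where
  "chi_squared k = density lborel (\<lambda>x. ennreal (chi_squared_density k x))"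

definition chi_squared_cdf :: "nat \<Rightarrow> real \<Rightarrow> real" where
  "chi_squared_cdf k t = measure (chi_squared k) {..t}"

end

theory Submission
  imports Defs
begin

text \<open>
  The development has two independent halves.
  (1) Probability: the chi-squared density is a probability density; the square of
  a standard normal variable has density \<open>\<chi>\<^sup>2\<^sub>1\<close>, and chi-squared densities convolve
  (\<open>\<chi>\<^sup>2\<^sub>m * \<chi>\<^sup>2\<^sub>n = \<chi>\<^sup>2\<^sub>m\<^sub>+\<^sub>n\<close>, via the Beta integral), so \<open>S\<^sub>+/(V+A) \<sim> \<chi>\<^sup>2\<^sub>k\<close>.
  (2) Analysis: a lower bound on the chi-squared median, \<open>P(\<chi>\<^sup>2\<^sub>k \<le> 3k\<^sup>2/(3k+2)) > 1/2\<close>.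
  On the logarithmic scale \<open>G(s) = F(k exp s)\<close> the cdf \<open>F\<close> has derivative
  \<open>C exp(-a \<psi>(s))\<close> with \<open>a = k/2\<close> and \<open>\<psi>(s) = exp s - 1 - s\<close>.  Comparing \<open>G\<close> at \<open>s\<close> with \<open>G\<close> at the
  reflected point \<open>\<tau>(s) = -s - 2\<psi>(s)/3\<close> (where \<open>\<psi>(\<tau>(s)) \<le> \<psi>(s)\<close>) shows
  \<open>G(0) \<ge> 1/2 + C/(3a)\<close>; since \<open>G' \<le> C\<close>, moving left by \<open>ln(1 + 1/(3a)) < 1/(3a)\<close> keeps
  \<open>G\<close> above 1/2.  The theorem combines both halves with \<open>kV/(V+A) \<ge> 3k\<^sup>2/(3k+2)\<close>.
\<close>

section \<open>The chi-squared density\<close>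

lemma chi_squared_density_nonneg: "chi_squared_density k x \<ge> 0"
proof (cases "k = 0")
  case False
  thus ?thesis using Gamma_real_pos[of "real k / 2"] by (simp add: chi_squared_density_def)
qed (simp add: chi_squared_density_def)

lemma chi_squared_density_measurable[measurable]: "chi_squared_density k \<in> borel_measurable borel"
  unfolding chi_squared_density_def[abs_def] by measurable

lemma chi_squared_density_continuous_on:
  assumes "c > 0"
  shows "continuous_on {c..u} (chi_squared_density k)"
proof -
  define D where "D = 2 powr (real k / 2) * Gamma (real k / 2)"
  have "continuous_on {c..u} (\<lambda>y. y powr (real k / 2 - 1) * exp (- y / 2) / D)"
    using assms by (cases "D = 0") (auto intro!: continuous_intros)
  moreover have "\<And>y. y \<in> {c..u} \<Longrightarrow> y powr (real k / 2 - 1) * exp (- y / 2) / D = chi_squared_density k y"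
    using assms unfolding chi_squared_density_def D_def by auto
  ultimately show ?thesis by (rule continuous_on_eq)
qed

text \<open>For \<open>k \<ge> 1\<close> the density integrates to 1: substituting \<open>x = 2t\<close> turns it into the
  Gamma integral.\<close>
lemma prob_space_chi_squared:
  assumes "k \<ge> 1"
  shows "prob_space (chi_squared k)"
proof (rule prob_spaceI)
  define a where "a = real k / 2"
  have a: "a > 0" using assms by (simp add: a_def)
  have rescaled: "2 * ennreal (chi_squared_density k (2 * t))
      = ennreal (indicator {0..} t * t powr (a - 1) / exp t) / ennreal (Gamma a)" for t :: real
  proof (cases "t > 0")
    case True
    have "2 * chi_squared_density k (2 * t) = (2 * t) powr (a - 1) * exp (- t) / (2 powr (a - 1) * Gamma a)"
      using True by (simp add: chi_squared_density_def a_def powr_diff)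
    also have "\<dots> = t powr (a - 1) / exp t / Gamma a"
      using True by (simp add: powr_mult exp_minus field_simps)
    finally have "2 * chi_squared_density k (2 * t) = t powr (a - 1) / exp t / Gamma a" .
    moreover have "2 * ennreal (chi_squared_density k (2 * t)) = ennreal (2 * chi_squared_density k (2 * t))"
      by (simp add: ennreal_mult')
    ultimately show ?thesis
      using True Gamma_real_pos[OF a] by (simp add: divide_ennreal)
  qed (simp add: chi_squared_density_def indicator_def)
  have "emeasure (chi_squared k) (space (chi_squared k))
      = (\<integral>\<^sup>+x. ennreal (chi_squared_density k x) \<partial>lborel)"
    by (simp add: chi_squared_def emeasure_density)
  also have "\<dots> = ennreal \<bar>2\<bar> * (\<integral>\<^sup>+t. ennreal (chi_squared_density k (0 + 2 * t)) \<partial>lborel)"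
    by (rule nn_integral_real_affine) simp_all
  also have "\<dots> = (\<integral>\<^sup>+t. ennreal (indicator {0..} t * t powr (a - 1) / exp t) / ennreal (Gamma a) \<partial>lborel)"
    by (simp add: nn_integral_cmult[symmetric] rescaled)
  also have "\<dots> = ennreal (Gamma a) / ennreal (Gamma a)"
    by (simp add: nn_integral_divide Gamma_conv_nn_integral_real[OF a])
  also have "\<dots> = 1"
    using Gamma_real_pos[OF a] by (simp add: divide_ennreal)
  finally show "emeasure (chi_squared k) (space (chi_squared k)) = 1" .
qed

section \<open>Sums of squared standard normal variables\<close>

text \<open>Pointwise form of the convolution integrand after the substitution \<open>y = x t\<close>: a
  constant in \<open>x\<close> times the Beta kernel \<open>t\<^sup>b\<^sup>-\<^sup>1 (1-t)\<^sup>a\<^sup>-\<^sup>1\<close> on \<open>[0,1]\<close>.\<close>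
lemma chi_squared_convolution_integrand:
  fixes m n :: nat and x t :: real
  assumes m: "m \<ge> 1" and n: "n \<ge> 1" and x: "x > 0"
  defines "a \<equiv> real m / 2" and "b \<equiv> real n / 2"
  shows "chi_squared_density m (x - x * t) * chi_squared_density n (x * t)
       = x powr (a + b - 2) * exp (- x / 2) / (2 powr a * Gamma a * (2 powr b * Gamma b))
         * (t powr (b - 1) * (1 - t) powr (a - 1) * indicator {0..1} t)"
proof -
  consider "t \<le> 0" | "t \<ge> 1" | "0 < t \<and> t < 1" by linarith
  thus ?thesis
  proof cases
    case 1
    hence "x * t \<le> 0" using x by (simp add: mult_nonneg_nonpos)
    hence "chi_squared_density n (x * t) = 0" by (simp add: chi_squared_density_def)
    moreover have "t powr (b - 1) * (1 - t) powr (a - 1) * indicator {0..1} t = 0"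
      using 1 by (cases "t = 0") (auto simp: indicator_def)
    ultimately show ?thesis by (simp only: mult_zero_right mult_zero_left)
  next
    case 2
    hence "x - x * t \<le> 0" using x by (simp add: algebra_simps mult_le_cancel_left1)
    hence "chi_squared_density m (x - x * t) = 0" by (simp add: chi_squared_density_def)
    moreover have "t powr (b - 1) * (1 - t) powr (a - 1) * indicator {0..1} t = 0"
      using 2 by (cases "t = 1") (auto simp: indicator_def)
    ultimately show ?thesis by (simp only: mult_zero_right mult_zero_left)
  next
    case 3
    have pos: "x - x * t > 0" "x * t > 0" using 3 x by (simp_all add: algebra_simps)
    have split: "x - x * t = x * (1 - t)" by (simp add: algebra_simps)
    have "chi_squared_density m (x - x * t) * chi_squared_density n (x * t)
        = ((x * (1 - t)) powr (a - 1) * exp (- (x * (1 - t)) / 2) / (2 powr a * Gamma a)) *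
          ((x * t) powr (b - 1) * exp (- (x * t) / 2) / (2 powr b * Gamma b))"
      using pos by (simp add: chi_squared_density_def a_def b_def split)
    also have "\<dots> = (x powr (a - 1) * x powr (b - 1)) * (exp (- (x * (1 - t)) / 2) * exp (- (x * t) / 2))
                   / (2 powr a * Gamma a * (2 powr b * Gamma b)) * (t powr (b - 1) * (1 - t) powr (a - 1))"
      using 3 x by (simp add: powr_mult[of x "1 - t"] powr_mult[of x t])
    also have "x powr (a - 1) * x powr (b - 1) = x powr (a + b - 2)"
      by (simp add: powr_add[symmetric])
    also have "exp (- (x * (1 - t)) / 2) * exp (- (x * t) / 2) = exp (- x / 2)"
      by (simp add: exp_add[symmetric] right_diff_distrib diff_divide_distrib)
    finally show ?thesis using 3 by simp
  qed
qed

lemma chi_squared_density_add_normalisation: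
  fixes m n :: nat and x :: real
  assumes m: "m \<ge> 1" and n: "n \<ge> 1" and x: "x > 0"
  defines "a \<equiv> real m / 2" and "b \<equiv> real n / 2"
  shows "x * (x powr (a + b - 2) * exp (- x / 2) / (2 powr a * Gamma a * (2 powr b * Gamma b))) * Beta b a
       = chi_squared_density (m + n) x"
proof -
  have a: "a > 0" and b: "b > 0" using m n by (auto simp: a_def b_def)
  have gab: "Gamma a > 0" "Gamma b > 0" "Gamma (a + b) > 0" using a b by (auto intro: Gamma_real_pos)
  have ab: "(real m + real n) / 2 = a + b" by (simp add: a_def b_def add_divide_distrib)
  have "x * (x powr (a + b - 2) * exp (- x / 2) / (2 powr a * Gamma a * (2 powr b * Gamma b))) * Beta b a
      = (x * x powr (a + b - 2)) * exp (- x / 2) / (2 powr a * 2 powr b * Gamma (a + b))"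
    using gab by (simp add: Beta_def field_simps add.commute[of b a])
  also have "x * x powr (a + b - 2) = x powr (a + b - 1)"
    using x by (simp add: powr_add[symmetric] powr_diff power2_eq_square)
  also have "2 powr a * 2 powr b = (2::real) powr (a + b)" by (simp add: powr_add)
  finally show ?thesis using x by (simp add: chi_squared_density_def ab)
qed

lemma chi_squared_convolution:
  fixes m n :: nat and x :: real
  assumes m: "m \<ge> 1" and n: "n \<ge> 1"
  shows "(\<integral>\<^sup>+y. ennreal (chi_squared_density m (x - y)) * ennreal (chi_squared_density n y) \<partial>lborel)
       = ennreal (chi_squared_density (m + n) x)"
proof (cases "x > 0")
  case False
  have integrand: "ennreal (chi_squared_density m (x - y)) * ennreal (chi_squared_density n y) = 0" for y
    using False by (cases "y > 0") (auto simp: chi_squared_density_def)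
  have "chi_squared_density (m + n) x = 0" using False by (simp add: chi_squared_density_def)
  thus ?thesis by (simp add: integrand)
next
  case x: True
  define a where "a = real m / 2"
  define b where "b = real n / 2"
  have a: "a > 0" and b: "b > 0" using m n by (auto simp: a_def b_def)
  define K where "K = x powr (a + b - 2) * exp (- x / 2) / (2 powr a * Gamma a * (2 powr b * Gamma b))"
  have K: "K \<ge> 0" using a b Gamma_real_pos[OF a] Gamma_real_pos[OF b] by (simp add: K_def)
  have Beta: "Beta b a \<ge> 0" using a b Gamma_real_pos[OF a] Gamma_real_pos[OF b] Gamma_real_pos[of "b + a"]
    by (simp add: Beta_def)
  have "(\<integral>\<^sup>+y. ennreal (chi_squared_density m (x - y)) * ennreal (chi_squared_density n y) \<partial>lborel)
      = (\<integral>\<^sup>+y. ennreal (chi_squared_density m (x - y) * chi_squared_density n y) \<partial>lborel)"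
    by (intro nn_integral_cong) (simp add: ennreal_mult chi_squared_density_nonneg)
  also have "\<dots> = ennreal \<bar>x\<bar> * (\<integral>\<^sup>+t. ennreal (chi_squared_density m (x - (0 + x * t)) * chi_squared_density n (0 + x * t)) \<partial>lborel)"
    by (rule nn_integral_real_affine) (use x in auto)
  also have "(\<integral>\<^sup>+t. ennreal (chi_squared_density m (x - (0 + x * t)) * chi_squared_density n (0 + x * t)) \<partial>lborel)
      = (\<integral>\<^sup>+t. ennreal K * (ennreal (t powr (b - 1) * (1 - t) powr (a - 1)) * indicator {0..1} t) \<partial>lborel)"
  proof (rule nn_integral_cong)
    fix t :: real
    have "ennreal (K * (t powr (b - 1) * (1 - t) powr (a - 1) * indicator {0..1} t))
        = ennreal K * (ennreal (t powr (b - 1) * (1 - t) powr (a - 1)) * indicator {0..1} t)"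
      using K by (simp add: ennreal_mult indicator_def)
    thus "ennreal (chi_squared_density m (x - (0 + x * t)) * chi_squared_density n (0 + x * t))
        = ennreal K * (ennreal (t powr (b - 1) * (1 - t) powr (a - 1)) * indicator {0..1} t)"
      using chi_squared_convolution_integrand[OF m n x, of t] by (simp add: K_def a_def b_def)
  qed
  also have "\<dots> = ennreal K * (\<integral>\<^sup>+t. ennreal (t powr (b - 1) * (1 - t) powr (a - 1)) * indicator {0..1} t \<partial>lborel)"
    by (rule nn_integral_cmult) measurable
  also have "(\<integral>\<^sup>+t. ennreal (t powr (b - 1) * (1 - t) powr (a - 1)) * indicator {0..1} t \<partial>lborel) = ennreal (Beta b a)"
    by (rule nn_integral_has_integral_lebesgue'[OF _ has_integral_Beta_real[OF b a]]) simp
  finally have "(\<integral>\<^sup>+y. ennreal (chi_squared_density m (x - y)) * ennreal (chi_squared_density n y) \<partial>lborel)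
       = ennreal (x * K * Beta b a)"
    using x K Beta by (simp add: ennreal_mult mult.assoc)
  thus ?thesis
    using chi_squared_density_add_normalisation[OF m n x] by (simp add: K_def a_def b_def)
qed

text \<open>Change of variables \<open>x = v\<^sup>2\<close>: the \<open>\<chi>\<^sup>2\<^sub>1\<close> density pulled back is twice the normal density.\<close>
lemma chi_squared_1_at_square:
  fixes v :: real assumes "v > 0"
  shows "chi_squared_density 1 (v\<^sup>2) * (2 * v) = 2 * std_normal_density v"
proof -
  have "(v\<^sup>2) powr (1/2 - 1) = 1 / v"
    using assms by (simp add: powr_minus_divide powr_half_sqrt[symmetric])
  moreover have "(2::real) powr (1/2) = sqrt 2" by (simp add: powr_half_sqrt)
  ultimately show ?thesis using assms
    by (simp add: chi_squared_density_def std_normal_density_def Gamma_one_half_real real_sqrt_mult field_simps)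
qed

lemma chi_squared_1_nn_integral_atMost:
  fixes r :: real assumes r: "r \<ge> 0"
  shows "(\<integral>\<^sup>+x. ennreal (chi_squared_density 1 x) * indicator {..r\<^sup>2} x \<partial>lborel)
       = 2 * (\<integral>\<^sup>+x. ennreal (std_normal_density x) * indicator {0<..r} x \<partial>lborel)"
proof -
  have "(\<integral>\<^sup>+x. ennreal (chi_squared_density 1 x) * indicator {..r\<^sup>2} x \<partial>lborel)
      = (\<integral>\<^sup>+x. ennreal (chi_squared_density 1 x * indicator {(\<lambda>v. v\<^sup>2) 0..(\<lambda>v. v\<^sup>2) r} x) \<partial>lborel)"
    by (intro nn_integral_cong) (auto simp: indicator_def chi_squared_density_def)
  also have "\<dots> = (\<integral>\<^sup>+v. ennreal (chi_squared_density 1 ((\<lambda>v. v\<^sup>2) v) * (2 * v) * indicator {0..r} v) \<partial>lborel)"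
    by (rule nn_integral_substitution[where g' = "\<lambda>v. 2 * v"])
       (auto intro!: derivative_eq_intros continuous_intros simp: r set_borel_measurable_def)
  also have "\<dots> = (\<integral>\<^sup>+v. 2 * (ennreal (std_normal_density v) * indicator {0<..r} v) \<partial>lborel)"
  proof (rule nn_integral_cong)
    fix v :: real
    show "ennreal (chi_squared_density 1 ((\<lambda>v. v\<^sup>2) v) * (2 * v) * indicator {0..r} v)
        = 2 * (ennreal (std_normal_density v) * indicator {0<..r} v)"
    proof (cases "v > 0")
      case True
      have "ennreal (chi_squared_density 1 (v\<^sup>2) * (2 * v)) = 2 * ennreal (std_normal_density v)"
        by (simp only: chi_squared_1_at_square[OF True]) (simp add: ennreal_mult)
      thus ?thesis using True by (simp add: indicator_def)
    qed (auto simp: indicator_def)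
  qed
  also have "\<dots> = 2 * (\<integral>\<^sup>+v. ennreal (std_normal_density v) * indicator {0<..r} v \<partial>lborel)"
    by (rule nn_integral_cmult) measurable
  finally show ?thesis .
qed

lemma std_normal_nn_integral_symmetric:
  fixes r :: real assumes r: "r \<ge> 0"
  shows "(\<integral>\<^sup>+x. ennreal (std_normal_density x) * indicator {-r..r} x \<partial>lborel)
       = 2 * (\<integral>\<^sup>+x. ennreal (std_normal_density x) * indicator {0<..r} x \<partial>lborel)"
proof -
  let ?\<phi> = "\<lambda>x. ennreal (std_normal_density x)"
  have "(\<integral>\<^sup>+x. ?\<phi> x * indicator {-r..r} x \<partial>lborel)
      = (\<integral>\<^sup>+x. ?\<phi> x * indicator {-r..0} x + ?\<phi> x * indicator {0<..r} x \<partial>lborel)"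
    by (intro nn_integral_cong) (auto simp: indicator_def)
  also have "\<dots> = (\<integral>\<^sup>+x. ?\<phi> x * indicator {-r..0} x \<partial>lborel) + (\<integral>\<^sup>+x. ?\<phi> x * indicator {0<..r} x \<partial>lborel)"
    by (rule nn_integral_add) measurable
  also have "(\<integral>\<^sup>+x. ?\<phi> x * indicator {-r..0} x \<partial>lborel)
      = ennreal \<bar>- 1\<bar> * (\<integral>\<^sup>+x. ?\<phi> (0 + (- 1) * x) * indicator {-r..0} (0 + (- 1) * x) \<partial>lborel)"
    by (rule nn_integral_real_affine) auto
  also have "\<dots> = (\<integral>\<^sup>+x. ?\<phi> x * indicator {0..r} x \<partial>lborel)"
    by (simp add: std_normal_density_def indicator_def conj_commute)
  also have "\<dots> = (\<integral>\<^sup>+x. ?\<phi> x * indicator {0<..r} x \<partial>lborel)"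
    by (intro nn_integral_cong_AE)
       (use AE_lborel_singleton[of 0] in \<open>auto elim!: eventually_mono simp: indicator_def\<close>)
  finally show ?thesis by (simp add: mult_2)
qed

text \<open>The square of a standard normal variable is \<open>\<chi>\<^sup>2\<^sub>1\<close>-distributed: for \<open>a = r\<^sup>2 \<ge> 0\<close>,
  \<open>P(Z\<^sup>2 \<le> a) = P(-r \<le> Z \<le> r)\<close>, which the two previous lemmas identify with the \<open>\<chi>\<^sup>2\<^sub>1\<close> mass.\<close>
lemma (in prob_space) std_normal_square_chi_squared_1:
  assumes Z: "distributed M lborel Z std_normal_density"
  shows "distributed M lborel (\<lambda>\<omega>. (Z \<omega>)\<^sup>2) (chi_squared_density 1)"
proof (rule distributedI_borel_atMost[where g = "\<lambda>a. measure M {x\<in>space M. (Z x)\<^sup>2 \<le> a}"])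
  have Zm[measurable]: "Z \<in> borel_measurable M" using distributed_measurable[OF Z] by simp
  show "(\<lambda>\<omega>. (Z \<omega>)\<^sup>2) \<in> borel_measurable M" by measurable
  show "chi_squared_density 1 \<in> borel_measurable borel" by measurable
  show "AE x in lborel. 0 \<le> chi_squared_density 1 x" by (simp add: chi_squared_density_nonneg)
  fix a :: real
  show "emeasure M {x\<in>space M. (Z x)\<^sup>2 \<le> a} = ennreal (measure M {x\<in>space M. (Z x)\<^sup>2 \<le> a})"
    by (simp add: emeasure_eq_measure)
  have "(\<integral>\<^sup>+x. ennreal (chi_squared_density 1 x) * indicator {..a} x \<partial>lborel) = emeasure M {x\<in>space M. (Z x)\<^sup>2 \<le> a}"
  proof (cases "a \<ge> 0")
    case False
    have empty: "{x\<in>space M. (Z x)\<^sup>2 \<le> a} = {}" using False by (auto simp: not_le intro: less_le_trans)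
    have integrand: "ennreal (chi_squared_density 1 x) * indicator {..a} x = 0" for x
      using False by (auto simp: indicator_def chi_squared_density_def)
    show ?thesis by (simp only: integrand empty) simp
  next
    case True
    define r where "r = sqrt a"
    have r: "r \<ge> 0" and ar: "a = r\<^sup>2" using True by (auto simp: r_def)
    have "{x\<in>space M. (Z x)\<^sup>2 \<le> a} = Z -` {-r..r} \<inter> space M"
      using r by (auto simp: ar abs_le_square_iff[symmetric] abs_le_iff)
    hence "emeasure M {x\<in>space M. (Z x)\<^sup>2 \<le> a} = (\<integral>\<^sup>+x. ennreal (std_normal_density x) * indicator {-r..r} x \<partial>lborel)"
      using distributed_emeasure[OF Z, of "{-r..r}"] by simp
    thus ?thesis
      using chi_squared_1_nn_integral_atMost[OF r] std_normal_nn_integral_symmetric[OF r] by (simp add: ar)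
  qed
  thus "(\<integral>\<^sup>+x. ennreal (chi_squared_density 1 x * indicator {..a} x) \<partial>lborel) = ennreal (measure M {x\<in>space M. (Z x)\<^sup>2 \<le> a})"
    by (simp add: emeasure_eq_measure indicator_mult_ennreal mult.commute)
qed

lemma (in prob_space) sum_chi_squared_1:
  assumes "finite I" and "I \<noteq> {}"
    and "\<And>i. i \<in> I \<Longrightarrow> distributed M lborel (X i) (chi_squared_density 1)"
    and "indep_vars (\<lambda>i. borel) X I"
  shows "distributed M lborel (\<lambda>x. \<Sum>i\<in>I. X i x) (chi_squared_density (card I))"
  using assms
proof (induct rule: finite_ne_induct)
  case (singleton i) then show ?case by auto
next
  case (insert i I)
  have "indep_var borel (X i) borel (\<lambda>x. \<Sum>j\<in>I. X j x)"
    using insert by (intro indep_vars_sum) (auto intro!: indep_vars_subset)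
  moreover have "distributed M lborel (\<lambda>x. \<Sum>j\<in>I. X j x) (chi_squared_density (card I))"
    using insert by (auto intro!: insert.hyps(4) indep_vars_subset[OF insert.prems(2)])
  ultimately have "distributed M lborel (\<lambda>x. X i x + (\<Sum>j\<in>I. X j x))
     (\<lambda>x. \<integral>\<^sup>+y. ennreal (chi_squared_density 1 (x - y)) * ennreal (chi_squared_density (card I) y) \<partial>lborel)"
    using insert by (intro distributed_convolution) auto
  also have "(\<lambda>x. \<integral>\<^sup>+y. ennreal (chi_squared_density 1 (x - y)) * ennreal (chi_squared_density (card I) y) \<partial>lborel)
      = (\<lambda>x. ennreal (chi_squared_density (card (insert i I)) x))"
    using insert by (intro ext) (simp add: chi_squared_convolution Suc_le_eq card_gt_0_iff)
  also have "(\<lambda>x. X i x + (\<Sum>j\<in>I. X j x)) = (\<lambda>x. \<Sum>j\<in>insert i I. X j x)"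
    using insert by auto
  finally show ?case .
qed

lemma (in prob_space) sum_squares_standardised_normal:
  assumes "finite I" and "I \<noteq> {}" and \<sigma>: "\<sigma> > 0"
    and ind: "indep_vars (\<lambda>_. borel) y I"
    and normal: "\<And>i. i \<in> I \<Longrightarrow> distributed M lborel (y i) (normal_density (\<mu> i) \<sigma>)"
  shows "distributed M lborel (\<lambda>\<omega>. \<Sum>i\<in>I. ((y i \<omega> - \<mu> i) / \<sigma>)\<^sup>2) (chi_squared_density (card I))"
proof (rule sum_chi_squared_1[OF assms(1,2)])
  fix i assume "i \<in> I"
  from normal_standard_normal_convert[OF \<sigma>] normal[OF this]
  have "distributed M lborel (\<lambda>\<omega>. (y i \<omega> - \<mu> i) / \<sigma>) std_normal_density" by simp
  thus "distributed M lborel (\<lambda>\<omega>. ((y i \<omega> - \<mu> i) / \<sigma>)\<^sup>2) (chi_squared_density 1)"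
    by (rule std_normal_square_chi_squared_1)
next
  show "indep_vars (\<lambda>i. borel) (\<lambda>i \<omega>. ((y i \<omega> - \<mu> i) / \<sigma>)\<^sup>2) I"
    by (rule indep_vars_compose2[OF ind]) measurable
qed

section \<open>The chi-squared distribution function\<close>

text \<open>If \<open>S\<close> has the \<open>\<chi>\<^sup>2\<^sub>k\<close> density then \<open>P(S < t) = P(\<chi>\<^sup>2\<^sub>k \<le> t)\<close>; the point \<open>t\<close> is a null set.\<close>
lemma (in prob_space) chi_squared_prob_less:
  assumes S: "distributed M lborel S (chi_squared_density k)"
  shows "prob {\<omega> \<in> space M. S \<omega> < t} = chi_squared_cdf k t"
proof -
  have "emeasure M (S -` {..<t} \<inter> space M) = (\<integral>\<^sup>+x. ennreal (chi_squared_density k x) * indicator {..<t} x \<partial>lborel)"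
    by (rule distributed_emeasure[OF S]) simp
  also have "\<dots> = (\<integral>\<^sup>+x. ennreal (chi_squared_density k x) * indicator {..t} x \<partial>lborel)"
    by (intro nn_integral_cong_AE)
       (use AE_lborel_singleton[of t] in \<open>auto elim!: eventually_mono simp: indicator_def\<close>)
  also have "\<dots> = emeasure (chi_squared k) {..t}"
    by (simp add: chi_squared_def emeasure_density)
  finally have "measure M (S -` {..<t} \<inter> space M) = measure (chi_squared k) {..t}"
    by (simp add: measure_def)
  moreover have "S -` {..<t} \<inter> space M = {\<omega> \<in> space M. S \<omega> < t}" by auto
  ultimately show ?thesis by (simp add: chi_squared_cdf_def)
qed

lemma chi_squared_cdf_has_derivative:
  assumes k: "k \<ge> 1" and x: "x > 0"
  shows "(chi_squared_cdf k has_real_derivative chi_squared_density k x) (at x)"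
proof -
  interpret P: prob_space "chi_squared k" by (rule prob_space_chi_squared[OF k])
  have sets[simp]: "sets (chi_squared k) = sets borel" by (simp add: chi_squared_def)
  define c where "c = x / 2"
  have c: "c > 0" "c < x" using x by (auto simp: c_def)
  have integrable: "chi_squared_density k integrable_on {c..u}" for u
    by (rule integrable_continuous_interval[OF chi_squared_density_continuous_on[OF c(1)]])
  have interval: "P.prob {c..u} = integral {c..u} (chi_squared_density k)" for u
  proof -
    have "emeasure (chi_squared k) {c..u} = (\<integral>\<^sup>+y. ennreal (chi_squared_density k y) * indicator {c..u} y \<partial>lborel)"
      by (simp add: chi_squared_def emeasure_density)
    also have "\<dots> = ennreal (integral {c..u} (chi_squared_density k))"
      by (rule nn_integral_has_integral_lebesgue'[OF _ integrable_integral[OF integrable]])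
         (simp add: chi_squared_density_nonneg)
    finally show ?thesis
      using integral_nonneg[OF integrable, of u] by (simp add: P.emeasure_eq_measure chi_squared_density_nonneg)
  qed
  have split: "chi_squared_cdf k u = P.prob {..<c} + integral {c..u} (chi_squared_density k)" if "u \<ge> c" for u
  proof -
    have "{..u} = {..<c} \<union> {c..u}" using that by auto
    hence "chi_squared_cdf k u = P.prob ({..<c} \<union> {c..u})" by (simp add: chi_squared_cdf_def)
    also have "\<dots> = P.prob {..<c} + P.prob {c..u}" by (rule P.finite_measure_Union) auto
    finally show ?thesis using interval[of u] by simp
  qed
  have "((\<lambda>u. integral {c..u} (chi_squared_density k)) has_real_derivative chi_squared_density k x) (at x within {c..2*x})"
    by (rule integral_has_real_derivative[OF chi_squared_density_continuous_on[OF c(1)]]) (use c x in simp)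
  from DERIV_add[OF DERIV_const this]
  have "((\<lambda>u. P.prob {..<c} + integral {c..u} (chi_squared_density k)) has_real_derivative chi_squared_density k x) (at x)"
    using c x by (simp add: at_within_Icc_at)
  thus ?thesis
    by (rule has_field_derivative_transform_within_open[of _ _ _ "{c<..<2*x}"]) (use c x split in auto)
qed

lemma chi_squared_cdf_tendsto_1:
  assumes "k \<ge> 1"
  shows "(chi_squared_cdf k \<longlongrightarrow> 1) at_top"
proof -
  have "real_distribution (chi_squared k)"
    using prob_space_chi_squared[OF assms]
    by (simp add: real_distribution_def real_distribution_axioms_def chi_squared_def)
  from real_distribution.cdf_lim_at_top_prob[OF this] show ?thesis
    by (simp add: cdf_def[abs_def] chi_squared_cdf_def[abs_def])
qed

lemma chi_squared_cdf_mono: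
  assumes "k \<ge> 1" and "s \<le> t"
  shows "chi_squared_cdf k s \<le> chi_squared_cdf k t"
proof -
  interpret P: prob_space "chi_squared k" by (rule prob_space_chi_squared[OF assms(1)])
  show ?thesis
    unfolding chi_squared_cdf_def using assms(2) by (intro P.finite_measure_mono) (auto simp: chi_squared_def)
qed

section \<open>A lower bound for the chi-squared median\<close>

text \<open>\<open>\<psi>(s) = exp s - 1 - s\<close> is the exponent of the chi-squared density on the logarithmic scale;
  \<open>\<tau>\<close> is the reflection used to compare the masses on both sides of the mean.\<close>
definition psi :: "real \<Rightarrow> real" where "psi s = exp s - 1 - s"
definition tau :: "real \<Rightarrow> real" where "tau s = - s - 2/3 * psi s"

lemma psi_nonneg: "psi s \<ge> 0"
  unfolding psi_def using exp_ge_add_one_self[of s] by linarith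

lemma has_real_derivative_psi: "(psi has_real_derivative (exp s - 1)) (at s)"
  unfolding psi_def[abs_def] by (auto intro!: derivative_eq_intros)

lemma has_real_derivative_tau: "(tau has_real_derivative (- 1 - 2/3 * (exp s - 1))) (at s)"
  unfolding tau_def[abs_def] by (auto intro!: derivative_eq_intros has_real_derivative_psi)

lemma exp_neg_psi_tendsto_0:
  assumes "a > 0"
  shows "((\<lambda>s. exp (- a * psi s)) \<longlongrightarrow> 0) at_top"
proof -
  have psi_at_top: "filterlim psi at_top at_top"
  proof (rule filterlim_at_top_mono[of "\<lambda>x. (- 1) + x"])
    show "filterlim (\<lambda>x::real. (- 1) + x) at_top at_top"
      by (rule filterlim_tendsto_add_at_top[OF tendsto_const filterlim_ident])
    show "\<forall>\<^sub>F x in at_top. (- 1) + x \<le> psi x"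
    proof (rule eventually_at_top_linorderI[of 0])
      fix x :: real assume "0 \<le> x"
      have "x - 1 \<le> x\<^sup>2 / 2" using zero_le_power2[of "x - 1"] by (simp add: power2_eq_square algebra_simps)
      with exp_lower_Taylor_quadratic[OF \<open>0 \<le> x\<close>] show "(- 1) + x \<le> psi x" by (simp add: psi_def)
    qed
  qed
  have "filterlim (\<lambda>s. - a * psi s) at_bot at_top"
    using filterlim_tendsto_neg_mult_at_bot[OF tendsto_const _ psi_at_top, of "-a"] assms by simp
  from filterlim_compose[OF exp_at_bot this] show ?thesis .
qed

lemma exp_cubic_lower:
  fixes s :: real assumes "s \<ge> 0"
  shows "1 + s + s^2/2 + s^3/6 \<le> exp s"
proof -
  obtain t where "exp s = (\<Sum>m<4. s ^ m / fact m) + exp t / fact 4 * s ^ 4"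
    using Maclaurin_exp_le[of s 4] by blast
  moreover have "(\<Sum>m<4. s ^ m / fact m) = 1 + s + s^2/2 + s^3/6"
    by (simp add: numeral_eq_Suc fact_numeral)
  moreover have "exp t / fact 4 * s ^ 4 \<ge> 0" by simp
  ultimately show ?thesis by linarith
qed

text \<open>\<open>\<psi>(\<tau>(s)) \<le> \<psi>(s)\<close> is equivalent to \<open>exp(\<tau>(s)) \<le> R(s) = (exp s - 4s + 2)/3\<close>; the next two facts
  say that \<open>R\<close> is positive and that \<open>ln R - \<tau>\<close> is nondecreasing on \<open>[0,\<infinity>)\<close> (its derivative is
  \<open>N(s)/(9R(s))\<close> with the numerator \<open>N\<close> below).\<close>
lemma tau_bound_positive:
  fixes s :: real assumes "s \<ge> 0"
  shows "exp s - 4 * s + 2 > 0"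
proof -
  have "s * (s - 3/2)^2 / 6 \<ge> 0" using assms by simp
  moreover have "s^2 - 27/8 * s + 3 > 0"
    using zero_le_power2[of "s - 27/16"] by (simp add: power2_eq_square algebra_simps)
  ultimately have "1 + s + s^2/2 + s^3/6 - 4 * s + 2 > 0"
    by (simp add: power2_eq_square power3_eq_cube algebra_simps)
  with exp_cubic_lower[OF assms] show ?thesis by linarith
qed

lemma tau_bound_numerator_nonneg:
  fixes s :: real assumes "s \<ge> 0"
  shows "2 * (exp s)^2 + 8 * exp s - 10 - 4 * (2 * exp s + 1) * s \<ge> 0"
proof -
  have N': "4 * (exp x)^2 - 8 * x * exp x - 4 \<ge> 0" if "x \<ge> 0" for x :: real
  proof -
    have "(\<lambda>x. 4 * (exp x)^2 - 8 * x * exp x - 4) 0 \<le> (\<lambda>x. 4 * (exp x)^2 - 8 * x * exp x - 4) x"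
    proof (rule deriv_nonneg_imp_mono[where g = "\<lambda>x. 4 * (exp x)^2 - 8 * x * exp x - 4"
                                       and g' = "\<lambda>x. 8 * exp x * (exp x - 1 - x)"])
      fix z :: real assume "z \<in> {0..x}"
      show "((\<lambda>x. 4 * (exp x)^2 - 8 * x * exp x - 4) has_real_derivative 8 * exp z * (exp z - 1 - z)) (at z)"
        by (auto intro!: derivative_eq_intros simp: algebra_simps power2_eq_square)
      show "8 * exp z * (exp z - 1 - z) \<ge> 0"
        using exp_ge_add_one_self[of z] by (intro mult_nonneg_nonneg) (auto simp: algebra_simps)
    qed (use that in auto)
    thus ?thesis by simp
  qed
  have "(\<lambda>x. 2 * (exp x)^2 + 8 * exp x - 10 - 4 * (2 * exp x + 1) * x) 0
        \<le> (\<lambda>x. 2 * (exp x)^2 + 8 * exp x - 10 - 4 * (2 * exp x + 1) * x) s"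
  proof (rule deriv_nonneg_imp_mono[where g = "\<lambda>x. 2 * (exp x)^2 + 8 * exp x - 10 - 4 * (2 * exp x + 1) * x"
                                     and g' = "\<lambda>x. 4 * (exp x)^2 - 8 * x * exp x - 4"])
    fix z :: real assume "z \<in> {0..s}"
    show "((\<lambda>x. 2 * (exp x)^2 + 8 * exp x - 10 - 4 * (2 * exp x + 1) * x) has_real_derivative
           4 * (exp z)^2 - 8 * z * exp z - 4) (at z)"
      by (auto intro!: derivative_eq_intros simp: algebra_simps power2_eq_square)
    show "4 * (exp z)^2 - 8 * z * exp z - 4 \<ge> 0" using N' \<open>z \<in> {0..s}\<close> by auto
  qed (use assms in auto)
  thus ?thesis by simp
qed

lemma psi_tau_le:
  fixes s :: real assumes "s \<ge> 0"
  shows "psi (tau s) \<le> psi s"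
proof -
  define R where "R = (\<lambda>x::real. (exp x - 4 * x + 2) / 3)"
  have R_pos: "R x > 0" if "x \<ge> 0" for x using tau_bound_positive[OF that] by (simp add: R_def)
  have "(\<lambda>x. ln (R x) - tau x) 0 \<le> (\<lambda>x. ln (R x) - tau x) s"
  proof (rule deriv_nonneg_imp_mono[where g = "\<lambda>x. ln (R x) - tau x"
                                     and g' = "\<lambda>x. (exp x - 4)/3 / R x + (1 + 2 * exp x) / 3"])
    fix z :: real assume z: "z \<in> {0..s}"
    hence Rz: "R z > 0" using R_pos by auto
    show "((\<lambda>x. ln (R x) - tau x) has_real_derivative (exp z - 4)/3 / R z + (1 + 2 * exp z) / 3) (at z)"
      unfolding R_def tau_def psi_def using Rz[unfolded R_def]
      by (auto intro!: derivative_eq_intros simp: field_simps)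
    have "(exp z - 4)/3 / R z + (1 + 2 * exp z) / 3
          = (2 * (exp z)^2 + 8 * exp z - 10 - 4 * (2 * exp z + 1) * z) / (9 * R z)"
      using Rz by (simp add: R_def field_simps power2_eq_square)
    also have "\<dots> \<ge> 0" using tau_bound_numerator_nonneg[of z] z Rz by auto
    finally show "(exp z - 4)/3 / R z + (1 + 2 * exp z) / 3 \<ge> 0" .
  qed (use assms in auto)
  hence "tau s \<le> ln (R s)" by (simp add: R_def tau_def psi_def)
  hence "exp (tau s) \<le> R s" using R_pos[OF assms] by (metis exp_le_cancel_iff exp_ln)
  thus ?thesis unfolding psi_def R_def tau_def by argo
qed

lemma chi_squared_density_log_scale:
  fixes k :: nat and s :: real
  assumes "k \<ge> 1"
  defines "a \<equiv> real k / 2"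
  shows "chi_squared_density k (real k * exp s) * (real k * exp s)
         = a powr a * exp (- a) / Gamma a * exp (- a * psi s)"
proof -
  have a: "a > 0" using assms by (simp add: a_def)
  have kk: "real k = 2 * a" by (simp add: a_def)
  have x: "real k * exp s > 0" using assms by simp
  have "chi_squared_density k (real k * exp s) * (real k * exp s)
      = (real k * exp s) powr (a - 1) * (real k * exp s) * exp (- (real k * exp s) / 2) / (2 powr a * Gamma a)"
    using x by (simp add: chi_squared_density_def a_def)
  also have "(real k * exp s) powr (a - 1) * (real k * exp s) = (real k * exp s) powr a"
    using x by (simp add: powr_diff)
  also have "(real k * exp s) powr a = 2 powr a * a powr a * exp (a * s)"
    using a by (simp add: kk powr_mult powr_def exp_add[symmetric] algebra_simps ln_mult)
  also have "2 powr a * a powr a * exp (a * s) * exp (- (real k * exp s) / 2) / (2 powr a * Gamma a)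
      = a powr a * (exp (a * s) * exp (- (real k * exp s) / 2)) / Gamma a"
    by (simp add: field_simps)
  also have "exp (a * s) * exp (- (real k * exp s) / 2) = exp (- a) * exp (- a * psi s)"
    by (simp add: kk psi_def exp_add[symmetric] algebra_simps)
  finally show ?thesis by (simp add: field_simps)
qed

text \<open>Since \<open>\<psi>(\<tau>(s)) \<le> \<psi>(s)\<close> and
  \<open>|\<tau>'(s)| = 1 + 2(exp s - 1)/3\<close>, the mass of \<open>G'\<close> on \<open>[\<tau>(s), 0]\<close> dominates that on \<open>[0, s]\<close>
  plus the remainder \<open>(2C/3a)(1 - exp(-a \<psi>(s)))\<close>, whose derivative is \<open>(2C/3)(exp s - 1) exp(-a \<psi>(s))\<close>.\<close>
lemma reflection_inequality:
  fixes G :: "real \<Rightarrow> real" and a C s :: real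
  assumes a: "a > 0" and C: "C \<ge> 0" and s: "s \<ge> 0"
    and G': "\<And>s. (G has_real_derivative C * exp (- a * psi s)) (at s)"
  shows "G (tau s) + G s + C * (2 / (3 * a)) * (1 - exp (- a * psi s)) \<le> 2 * G 0"
proof -
  define \<Phi> where "\<Phi> = (\<lambda>s. 2 * G 0 - G (tau s) - G s - C * (2 / (3 * a)) * (1 - exp (- a * psi s)))"
  define \<Phi>' where "\<Phi>' = (\<lambda>s. C * (1 + 2/3 * (exp s - 1)) * (exp (- a * psi (tau s)) - exp (- a * psi s)))"
  have \<Phi>_deriv: "(\<Phi> has_real_derivative \<Phi>' z) (at z)" for z
  proof -
    have "(\<Phi> has_real_derivative
       0 - C * exp (- a * psi (tau z)) * (- 1 - 2/3 * (exp z - 1)) - C * exp (- a * psi z)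
         - C * (2 / (3 * a)) * (0 - exp (- a * psi z) * (- a * (exp z - 1)))) (at z)"
      unfolding \<Phi>_def
      by (intro derivative_intros DERIV_chain2[OF G'] DERIV_chain2[OF DERIV_exp] G' DERIV_cmult
          has_real_derivative_tau has_real_derivative_psi)
    moreover have "0 - C * exp (- a * psi (tau z)) * (- 1 - 2/3 * (exp z - 1)) - C * exp (- a * psi z)
         - C * (2 / (3 * a)) * (0 - exp (- a * psi z) * (- a * (exp z - 1))) = \<Phi>' z"
      using a by (simp add: \<Phi>'_def field_simps)
    ultimately show ?thesis by simp
  qed
  have "\<Phi> 0 \<le> \<Phi> s"
  proof (rule deriv_nonneg_imp_mono[OF \<Phi>_deriv])
    fix z assume z: "z \<in> {0..s}"
    have "exp (- a * psi (tau z)) \<ge> exp (- a * psi z)"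
      using psi_tau_le[of z] z a by (simp add: mult_left_mono)
    moreover have "1 + 2/3 * (exp z - 1) > 0"
    proof -
      have "1 + 2/3 * (exp z - 1) = 1/3 + 2/3 * exp z" by (simp add: field_simps)
      thus ?thesis using exp_gt_zero[of z] by linarith
    qed
    ultimately show "\<Phi>' z \<ge> 0" unfolding \<Phi>'_def using C by (intro mult_nonneg_nonneg) auto
  qed (use s in auto)
  moreover have "\<Phi> 0 = 0" by (simp add: \<Phi>_def tau_def psi_def)
  ultimately show ?thesis by (simp add: \<Phi>_def)
qed

text \<open>Letting \<open>s \<rightarrow> \<infinity>\<close> in the reflection inequality (with \<open>G \<ge> 0\<close>, \<open>G \<rightarrow> 1\<close>): the value at the
  mean exceeds 1/2 by at least \<open>C/(3a)\<close>.\<close>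
lemma value_at_mean_lower_bound:
  fixes G :: "real \<Rightarrow> real" and a C :: real
  assumes a: "a > 0" and C: "C \<ge> 0"
    and G': "\<And>s. (G has_real_derivative C * exp (- a * psi s)) (at s)"
    and nonneg: "\<And>s. G s \<ge> 0" and lim: "(G \<longlongrightarrow> 1) at_top"
  shows "1/2 + C / (3 * a) \<le> G 0"
proof -
  have "C * (2 / (3 * a)) * (1 - 0) \<le> 2 * G 0 - 1"
  proof (rule tendsto_le[OF trivial_limit_at_top_linorder])
    show "((\<lambda>s. 2 * G 0 - G s) \<longlongrightarrow> 2 * G 0 - 1) at_top"
      by (intro tendsto_intros lim)
    show "((\<lambda>s. C * (2 / (3 * a)) * (1 - exp (- a * psi s))) \<longlongrightarrow> C * (2 / (3 * a)) * (1 - 0)) at_top"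
      by (intro tendsto_intros exp_neg_psi_tendsto_0 a)
    show "\<forall>\<^sub>F s in at_top. C * (2 / (3 * a)) * (1 - exp (- a * psi s)) \<le> 2 * G 0 - G s"
      using reflection_inequality[OF a C _ G'] nonneg
      by (intro eventually_at_top_linorderI[of 0]) (smt (verit))
  qed
  thus ?thesis by simp
qed

text \<open>Since \<open>G' \<le> C\<close>, moving left from the mean by \<open>|s|\<close> loses at most \<open>C |s|\<close>.\<close>
lemma left_of_mean_lower_bound:
  fixes G :: "real \<Rightarrow> real" and a C s :: real
  assumes a: "a \<ge> 0" and C: "C \<ge> 0"
    and G': "\<And>s. (G has_real_derivative C * exp (- a * psi s)) (at s)"
    and s: "s \<le> 0"
  shows "G 0 + C * s \<le> G s"
proof -
  have "C * s - G s \<le> C * 0 - G 0"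
  proof (rule deriv_nonneg_imp_mono[where g = "\<lambda>s. C * s - G s" and g' = "\<lambda>s. C - C * exp (- a * psi s)"])
    fix z assume "z \<in> {s..0}"
    show "((\<lambda>s. C * s - G s) has_real_derivative C - C * exp (- a * psi z)) (at z)"
      by (auto intro!: derivative_eq_intros G')
    have "exp (- a * psi z) \<le> 1" using a psi_nonneg[of z] by (simp add: mult_nonneg_nonneg)
    from mult_left_le[OF this C] show "C - C * exp (- a * psi z) \<ge> 0" by simp
  qed (use s in auto)
  thus ?thesis by simp
qed

text \<open>Median bound for any function with the analytic properties of the \<open>\<chi>\<^sup>2\<^sub>k\<close> cdf: at
  \<open>s\<^sub>0 = -ln(1 + 1/(3a))\<close>, i.e. \<open>x = 3k\<^sup>2/(3k+2)\<close>, the log-scale value is at least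
  \<open>G(0) + C s\<^sub>0 > G(0) - C/(3a) \<ge> 1/2\<close>.\<close>
lemma median_lower_bound:
  fixes F :: "real \<Rightarrow> real" and k :: nat
  assumes k: "k \<ge> 1"
    and F': "\<And>x. x > 0 \<Longrightarrow> (F has_real_derivative chi_squared_density k x) (at x)"
    and nonneg: "\<And>x. F x \<ge> 0"
    and lim: "(F \<longlongrightarrow> 1) at_top"
  shows "F (3 * (real k)^2 / (3 * real k + 2)) > 1/2"
proof -
  define a where "a = real k / 2"
  have a: "a > 0" using k by (simp add: a_def)
  define C where "C = a powr a * exp (- a) / Gamma a"
  have C: "C > 0" using a Gamma_real_pos[OF a] by (simp add: C_def)
  define G where "G = (\<lambda>s. F (real k * exp s))"
  have G': "(G has_real_derivative C * exp (- a * psi s)) (at s)" for s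
  proof -
    have "(G has_real_derivative chi_squared_density k (real k * exp s) * (real k * exp s)) (at s)"
      unfolding G_def using k by (auto intro!: DERIV_chain2[OF F'] derivative_eq_intros)
    thus ?thesis using chi_squared_density_log_scale[OF k, of s] by (simp add: C_def a_def)
  qed
  have "(G \<longlongrightarrow> 1) at_top"
  proof -
    have "filterlim (\<lambda>s. real k * exp s) at_top at_top"
      using k by (intro filterlim_tendsto_pos_mult_at_top[OF tendsto_const _ exp_at_top]) auto
    from filterlim_compose[OF lim this] show ?thesis by (simp add: G_def o_def)
  qed
  with value_at_mean_lower_bound[OF a less_imp_le[OF C] G'] nonneg
  have G0: "1/2 + C / (3 * a) \<le> G 0" by (simp add: G_def)
  define s0 where "s0 = - ln (1 + 1 / (3 * a))"
  have "- s0 < 1 / (3 * a)" using ln_add_one_self_less_self[of "1 / (3 * a)"] a by (simp add: s0_def)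
  hence "C * (- s0) < C * (1 / (3 * a))" using C by (intro mult_strict_left_mono)
  hence s0: "s0 \<le> 0" "C * s0 > - (C / (3 * a))" using a by (auto simp: s0_def)
  have "G s0 > 1/2"
    using left_of_mean_lower_bound[OF less_imp_le[OF a] less_imp_le[OF C] G' s0(1)] G0 s0(2) by simp
  moreover have "real k * exp s0 = 3 * (real k)^2 / (3 * real k + 2)"
    using k by (simp add: s0_def a_def exp_minus field_simps power2_eq_square)
  ultimately show ?thesis by (simp add: G_def)
qed

lemma chi_squared_cdf_gt_half:
  assumes k: "k \<ge> 1" and t: "3 * (real k)^2 / (3 * real k + 2) \<le> t"
  shows "chi_squared_cdf k t > 1/2"
proof -
  have "chi_squared_cdf k (3 * (real k)^2 / (3 * real k + 2)) > 1/2"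
    by (rule median_lower_bound[OF k chi_squared_cdf_has_derivative[OF k]])
       (simp_all add: chi_squared_cdf_def chi_squared_cdf_tendsto_1[OF k])
  with chi_squared_cdf_mono[OF k t] show ?thesis by linarith
qed

theorem mainTheorem4:
  fixes M :: "'a measure" and k :: nat and V A :: real
    and y :: "nat \<Rightarrow> 'a \<Rightarrow> real" and \<mu> :: "nat \<Rightarrow> real"
  assumes "prob_space M"
    and "k \<ge> 1" and "V > 0" and "0 \<le> A" and "A \<le> 2 * V / (3 * real k)"
    and "prob_space.indep_vars M (\<lambda>_. borel) y {1..k}"
    and "\<And>i. i \<in> {1..k} \<Longrightarrow> distributed M lborel (y i) (normal_density (\<mu> i) (sqrt (V + A)))"
  shows "measure M {\<omega> \<in> space M. (\<Sum>i=1..k. (y i \<omega> - \<mu> i)\<^sup>2) / real k - V < 0}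
           = chi_squared_cdf k (real k * (V / (V + A)))
       \<and> chi_squared_cdf k (real k * (V / (V + A))) > 1 / 2"
proof -
  interpret P: prob_space M by (rule assms(1))
  define \<sigma> where "\<sigma> = sqrt (V + A)"
  have VA: "V + A > 0" using assms(3,4) by simp
  hence \<sigma>: "\<sigma> > 0" "\<sigma>\<^sup>2 = V + A" by (simp_all add: \<sigma>_def)
  define S where "S = (\<lambda>\<omega>. \<Sum>i=1..k. ((y i \<omega> - \<mu> i) / \<sigma>)\<^sup>2)"
  have "distributed M lborel S (chi_squared_density k)"
    using P.sum_squares_standardised_normal[OF _ _ \<sigma>(1) assms(6) assms(7)[folded \<sigma>_def]] assms(2)
    by (simp add: S_def atLeastAtMost_iff)
  hence "measure M {\<omega> \<in> space M. S \<omega> < real k * (V / (V + A))} = chi_squared_cdf k (real k * (V / (V + A)))"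
    by (rule P.chi_squared_prob_less)
  moreover have "{\<omega> \<in> space M. (\<Sum>i=1..k. (y i \<omega> - \<mu> i)\<^sup>2) / real k - V < 0}
      = {\<omega> \<in> space M. S \<omega> < real k * (V / (V + A))}"
  proof -
    have "(\<Sum>i=1..k. (y i \<omega> - \<mu> i)\<^sup>2) = (V + A) * S \<omega>" for \<omega>
      using \<sigma> VA by (simp add: S_def sum_distrib_left power_divide)
    moreover have "(V + A) * s / real k - V < 0 \<longleftrightarrow> s < real k * (V / (V + A))" for s
      using assms(2) VA by (simp add: field_simps)
    ultimately show ?thesis by auto
  qed
  moreover have "3 * (real k)^2 / (3 * real k + 2) \<le> real k * (V / (V + A))"
  proof -
    have "3 * real k * (V + A) \<le> V * (3 * real k + 2)"
      using assms(2,5) by (simp add: field_simps)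
    hence "3 * real k / (3 * real k + 2) \<le> V / (V + A)"
      using VA by (simp add: divide_simps)
    from mult_left_mono[OF this, of "real k"] show ?thesis
      by (simp add: power2_eq_square mult.assoc mult.left_commute)
  qed
  ultimately show ?thesis using chi_squared_cdf_gt_half[OF assms(2)] by simp
qed

end
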